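(* If $\mathcal{C}$ is a hypergraph with $\psi(\mathcal{C})=1$, then $\mathbb{S}^0$ is not contractible in $\operatorname{Ind}(\mathcal{C})$; that is, $\operatorname{Ind}(\mathcal{C})$ is nonempty but not path-connected.
   Context: A hypergraph $\mathcal{C}$ on a finite vertex set $V$ is a family of pairwise incomparable subsets of $V$ (its edges), each of cardinality at least $2$; vertices lying in no edge are allowed. The independence complex $\operatorname{Ind}(\mathcal{C})$ is the simplicial complex on $V$ whose faces are the subsets of $V$ containing no edge of $\mathcal{C}$. For an edge $F$: $\mathcal{C}-F$ is the hypergraph on $V$ with edge set $\mathcal{C}\setminus\{F\}$; $N_{\mathcal{C}}(F)=\bigcup\{E\setminus F : E\in\mathcal{C},\ |E\setminus F|=1\}$; and $\mathcal{C}:F$ is the hypergraph on $V\setminus(F\cup N_{\mathcal{C}}(F))$ whose edges are the members of cardinality at least $2$ among the inclusion-minimal members of the family $\{E\setminus F : E\in \mathcal{C}-F\}$. The number $\psi(\mathcal{C})\in\mathbb{Z}_{\ge 0}\cup\{\infty\}$ is defined recursively: $\psi(\mathcal{C})=0$ if $V=\emptyset$; $\psi(\mathcal{C})=\infty$ if $V\neq\emptyset$ and $\mathcal{C}$ has no edges; otherwise $\psi(\mathcal{C})=\max_{F\in\mathcal{C}}\min\{\psi(\mathcal{C}-F),\ \psi(\mathcal{C}:F)+|F|-1\}$. *)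

theory Defs
  imports "HOL-Analysis.Analysis" "HOL-Library.Extended_Nat"
begin

definition hypergraph :: "'a set \<Rightarrow> 'a set set \<Rightarrow> bool" where
  "hypergraph V C \<longleftrightarrow> finite V \<and> (\<forall>E\<in>C. E \<subseteq> V \<and> 2 \<le> card E)
     \<and> (\<forall>E\<in>C. \<forall>E'\<in>C. E \<subseteq> E' \<longrightarrow> E = E')"

definition Ind :: "'a set \<Rightarrow> 'a set set \<Rightarrow> 'a set set" where
  "Ind V C = {S. S \<subseteq> V \<and> \<not> (\<exists>E\<in>C. E \<subseteq> S)}"

definition nbhd :: "'a set set \<Rightarrow> 'a set \<Rightarrow> 'a set" where
  "nbhd C F = \<Union> {E - F | E. E \<in> C \<and> card (E - F) = 1}"

definition minimal_members :: "'a set set \<Rightarrow> 'a set set" where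
  "minimal_members S = {X \<in> S. \<forall>Y\<in>S. Y \<subseteq> X \<longrightarrow> Y = X}"

text \<open>Edge set of C:F (its vertex set is V - (F \<union> nbhd C F)).\<close>
definition colon_edges :: "'a set set \<Rightarrow> 'a set \<Rightarrow> 'a set set" where
  "colon_edges C F = {X \<in> minimal_members ((\<lambda>E. E - F) ` (C - {F})). 2 \<le> card X}"

lemma card_colon_edges_less:
  assumes "finite C" "F \<in> C"
  shows "card (colon_edges C F) < card C"
proof -
  have "colon_edges C F \<subseteq> (\<lambda>E. E - F) ` (C - {F})"
    unfolding colon_edges_def minimal_members_def by auto
  hence "card (colon_edges C F) \<le> card ((\<lambda>E. E - F) ` (C - {F}))"
    using assms by (intro card_mono) auto
  also have "\<dots> \<le> card (C - {F})" using assms by (intro card_image_le) auto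
  also have "\<dots> < card C" using assms by (meson card_Diff1_less)
  finally show ?thesis .
qed

text \<open>The invariant psi (values in enat, with \<infinity>). Outside finite inputs the value
  is an irrelevant default.\<close>
function psi :: "'a set \<Rightarrow> 'a set set \<Rightarrow> enat" where
  "psi V C = (if \<not> finite V \<or> \<not> finite C then 0
     else if V = {} then 0
     else if C = {} then \<infinity>
     else Max ((\<lambda>F. min (psi V (C - {F}))
                         (psi (V - (F \<union> nbhd C F)) (colon_edges C F) + enat (card F - 1))) ` C))"
  by pat_completeness auto
termination
  by (relation "Wellfounded.measure (\<lambda>(V, C). card C)")
     (simp_all add: card_colon_edges_less card_gt_0_iff)

text \<open>Geometric realization of a simplicial complex K on a finite vertex set V, as a
  subspace of the (product) space of real functions on the vertex type.\<close>
definition geom_real :: "'a set \<Rightarrow> 'a set set \<Rightarrow> ('a \<Rightarrow> real) set" where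
  "geom_real V K = {f. (\<forall>v. 0 \<le> f v) \<and> (\<forall>v. v \<notin> V \<longrightarrow> f v = 0)
      \<and> {v. f v \<noteq> 0} \<in> K \<and> sum f V = 1}"

end

theory Submission
  imports Defs
begin

text \<open>
  If every edge of \<open>C\<close> has two vertices and every edge \<open>F\<close> dominates the whole
  vertex set (\<open>V \<subseteq> F \<union> N(F)\<close>), then the vertex set splits into the non-neighbours
  and the neighbours of any edge vertex \<open>a\<close>, and no face of \<open>Ind(C)\<close> meets both parts.
  Conversely, if no such splitting of the faces exists, an induction over the number of
  edges shows \<open>\<psi>(C) \<ge> 2\<close>: deleting an edge preserves non-splitting, and some edge
  \<open>F\<close> has \<open>|F| \<ge> 3\<close> or leaves vertices outside \<open>F \<union> N(F)\<close>, so that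
  \<open>\<psi>(C:F) + |F| - 1 \<ge> 1 + 1\<close>. Hence \<open>\<psi>(C) = 1\<close> forces a splitting, and summing the
  coordinates over one part maps the geometric realization onto \<open>{0, 1}\<close>.
\<close>

declare psi.simps[simp del]

lemma psi_empty_edges: "finite V \<Longrightarrow> V \<noteq> {} \<Longrightarrow> psi V {} = \<infinity>"
  by (subst psi.simps) auto

lemma psi_empty_vertices: "psi {} C = 0"
  by (subst psi.simps) auto

lemma le_psi_if_le_branches:
  assumes "finite V" "V \<noteq> {}" "finite C" "F \<in> C"
    and "k \<le> psi V (C - {F})"
    and "k \<le> psi (V - (F \<union> nbhd C F)) (colon_edges C F) + enat (card F - 1)"
  shows "k \<le> psi V C"
proof -
  have "psi V C = Max ((\<lambda>F. min (psi V (C - {F}))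
                         (psi (V - (F \<union> nbhd C F)) (colon_edges C F) + enat (card F - 1))) ` C)"
    using assms(1-4) by (subst psi.simps) auto
  also have "\<dots> \<ge> min (psi V (C - {F}))
                   (psi (V - (F \<union> nbhd C F)) (colon_edges C F) + enat (card F - 1))"
    using assms(3,4) by (intro Max_ge) auto
  finally show ?thesis using assms(5,6) by (meson min.boundedI order_trans)
qed

lemma finite_colon_edges: "finite C \<Longrightarrow> finite (colon_edges C F)"
  unfolding colon_edges_def minimal_members_def by auto

lemma enat_le_plus_enat: "m \<le> n \<Longrightarrow> enat m \<le> x + enat n"
  by (cases x) auto

lemma one_le_psi:
  assumes "finite V" "V \<noteq> {}" "finite C" "\<forall>E\<in>C. 2 \<le> card E"
  shows "1 \<le> psi V C"
  using assms(3,4)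
proof (induction "card C" arbitrary: C rule: less_induct)
  case less
  show ?case
  proof (cases "C = {}")
    case True
    thus ?thesis using psi_empty_edges[OF assms(1,2)] by simp
  next
    case False
    then obtain F where F: "F \<in> C" by auto
    have "1 \<le> psi V (C - {F})"
      using less F card_Diff1_less[OF less(2) F] by (intro less.hyps) auto
    moreover have "enat 1 \<le> psi (V - (F \<union> nbhd C F)) (colon_edges C F) + enat (card F - 1)"
      using less(3) F by (intro enat_le_plus_enat) force
    ultimately show ?thesis
      using le_psi_if_le_branches[OF assms(1,2) less(2) F] by (simp add: one_enat_def)
  qed
qed

definition faces_split :: "'a set \<Rightarrow> 'a set set \<Rightarrow> bool" where
  "faces_split V C \<longleftrightarrow> (\<exists>U a b. U \<subseteq> V \<and> a \<in> U \<and> b \<in> V - U \<and>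
      (\<forall>S\<in>Ind V C. S \<subseteq> U \<or> S \<inter> U = {}))"

lemma Ind_antimono: "C \<subseteq> C' \<Longrightarrow> Ind V C' \<subseteq> Ind V C"
  unfolding Ind_def by auto

lemma faces_split_mono:
  assumes "faces_split V C" "C \<subseteq> C'"
  shows "faces_split V C'"
proof -
  obtain U a b where "U \<subseteq> V" "a \<in> U" "b \<in> V - U"
    and "\<forall>S\<in>Ind V C. S \<subseteq> U \<or> S \<inter> U = {}"
    using assms(1) unfolding faces_split_def by blast
  moreover have "Ind V C' \<subseteq> Ind V C" using assms(2) by (rule Ind_antimono)
  ultimately show ?thesis unfolding faces_split_def by blast
qed

lemma faces_split_if_dominating_graph:
  assumes edges: "\<forall>E\<in>C. E \<subseteq> V \<and> card E = 2"
    and dominating: "\<forall>F\<in>C. V \<subseteq> F \<union> nbhd C F"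
    and "C \<noteq> {}"
  shows "faces_split V C"
proof -
  obtain a b where ab: "a \<noteq> b" "{a, b} \<in> C"
    using \<open>C \<noteq> {}\<close> edges by (metis card_2_iff ex_in_conv)
  define U where "U = {v\<in>V. v = a \<or> {a, v} \<notin> C}"
  have "a \<in> U" "b \<in> V - U" using ab edges unfolding U_def by auto
  moreover have "S \<subseteq> U \<or> S \<inter> U = {}" if S: "S \<in> Ind V C" for S
  proof (rule ccontr)
    assume "\<not> ?thesis"
    then obtain x y where x: "x \<in> S" "x \<in> U" and y: "y \<in> S" "y \<notin> U" by blast
    have SV: "S \<subseteq> V" and independent: "\<And>E. E \<in> C \<Longrightarrow> \<not> E \<subseteq> S"
      using S unfolding Ind_def by auto
    have ay: "{a, y} \<in> C" using y SV unfolding U_def by auto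
    have "x \<noteq> a" using independent[OF ay] x y by auto
    hence ax: "{a, x} \<notin> C" using x unfolding U_def by auto
    have "x \<noteq> y" using x y by blast
    have xy: "{x, y} \<notin> C"
    proof
      assume "{x, y} \<in> C"
      from independent[OF this] show False using x(1) y(1) by simp
    qed
    from dominating ay have "V \<subseteq> {a, y} \<union> nbhd C {a, y}" by (rule bspec)
    hence "x \<in> nbhd C {a, y}" using SV x(1) \<open>x \<noteq> a\<close> \<open>x \<noteq> y\<close> by auto
    then obtain E where E: "E \<in> C" "card (E - {a, y}) = 1" "x \<in> E"
      unfolding nbhd_def by auto
    have "card E = 2" using edges E(1) by blast
    then obtain p q where pq: "p \<noteq> q" "E = {p, q}" by (meson card_2_iff)
    have "E - {a, y} \<noteq> E"
    proof
      assume "E - {a, y} = E"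
      from this E(2) have "card E = 1" by (rule subst)
      with \<open>card E = 2\<close> show False by simp
    qed
    hence "E = {x, a} \<or> E = {x, y}" using pq E(3) \<open>x \<noteq> a\<close> \<open>x \<noteq> y\<close> by auto
    thus False using E(1) ax xy by (metis insert_commute)
  qed
  moreover have "U \<subseteq> V" unfolding U_def by auto
  ultimately show ?thesis unfolding faces_split_def by blast
qed

lemma two_le_psi_if_not_faces_split:
  assumes "finite V" "V \<noteq> {}" "finite C" "\<forall>E\<in>C. E \<subseteq> V \<and> 2 \<le> card E"
    and "\<not> faces_split V C"
  shows "2 \<le> psi V C"
  using assms(3-5)
proof (induction "card C" arbitrary: C rule: less_induct)
  case less
  show ?case
  proof (cases "C = {}")
    case True
    thus ?thesis using psi_empty_edges[OF assms(1,2)] by simp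
  next
    case False
    obtain F where F: "F \<in> C" and large: "3 \<le> card F \<or> V - (F \<union> nbhd C F) \<noteq> {}"
      using faces_split_if_dominating_graph[of C V] less(3,4) False
      by (metis Diff_eq_empty_iff le_antisym not_less_eq_eq numeral_2_eq_2 numeral_3_eq_3)
    have "2 \<le> psi V (C - {F})"
      using less F card_Diff1_less[OF less(2) F] faces_split_mono[of V "C - {F}" C]
      by (intro less.hyps) auto
    moreover have "2 \<le> psi (V - (F \<union> nbhd C F)) (colon_edges C F) + enat (card F - 1)"
      using large
    proof
      assume "3 \<le> card F"
      hence "enat 2 \<le> psi (V - (F \<union> nbhd C F)) (colon_edges C F) + enat (card F - 1)"
        by (intro enat_le_plus_enat) simp
      thus ?thesis by (simp only: enat_numeral)
    next
      assume "V - (F \<union> nbhd C F) \<noteq> {}"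
      hence "1 \<le> psi (V - (F \<union> nbhd C F)) (colon_edges C F)"
        using assms(1) less(2) by (intro one_le_psi finite_colon_edges) (auto simp: colon_edges_def)
      moreover have "1 \<le> enat (card F - 1)" using less(3) F by (force simp: one_enat_def)
      ultimately have "1 + 1 \<le> psi (V - (F \<union> nbhd C F)) (colon_edges C F) + enat (card F - 1)"
        by (rule add_mono)
      thus ?thesis by (simp add: one_add_one)
    qed
    ultimately show ?thesis
      using le_psi_if_le_branches[OF assms(1,2) less(2) F] by blast
  qed
qed

lemma vertex_in_geom_real:
  assumes "finite V" "a \<in> V" "\<forall>E\<in>C. 2 \<le> card E"
  shows "(\<lambda>v. if v = a then 1 else 0) \<in> geom_real V (Ind V C)"
proof -
  have "\<not> E \<subseteq> {a}" if "E \<in> C" for E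
    using assms(3) that card_mono[of "{a}" E] by fastforce
  hence "{a} \<in> Ind V C" unfolding Ind_def using assms(2) by blast
  moreover have "{v. (if v = a then 1 else 0::real) \<noteq> 0} = {a}" by auto
  ultimately show ?thesis unfolding geom_real_def using assms(1,2) by (simp add: sum.delta)
qed

lemma not_connected_geom_real_if_faces_split:
  assumes "finite V" "\<forall>E\<in>C. 2 \<le> card E" "faces_split V C"
  shows "\<not> connected (geom_real V (Ind V C))"
proof
  assume connected: "connected (geom_real V (Ind V C))"
  obtain U a b where U: "U \<subseteq> V" "a \<in> U" "b \<in> V - U"
    and split: "\<forall>S\<in>Ind V C. S \<subseteq> U \<or> S \<inter> U = {}"
    using assms(3) unfolding faces_split_def by blast
  let ?X = "geom_real V (Ind V C)" and ?g = "\<lambda>f :: 'a \<Rightarrow> real. sum f U"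
  have "finite U" using U assms(1) finite_subset by auto
  have "continuous_on UNIV ?g"
    by (intro continuous_intros continuous_on_product_coordinates)
  hence connected_image: "connected (?g ` ?X)"
    using connected connected_continuous_image continuous_on_subset by blast
  have "?g f \<in> {0, 1}" if f: "f \<in> ?X" for f
  proof -
    have "{v. f v \<noteq> 0} \<in> Ind V C" using f unfolding geom_real_def by simp
    with split consider (inside) "{v. f v \<noteq> 0} \<subseteq> U" | (outside) "{v. f v \<noteq> 0} \<inter> U = {}"
      by meson
    then show ?thesis
    proof cases
      case inside
      have "sum f V = sum f U"
        by (rule sum.mono_neutral_right[OF assms(1) U(1)]) (use inside in blast)
      then show ?thesis using f unfolding geom_real_def by simp
    next
      case outside
      have "sum f U = 0" by (rule sum.neutral) (use outside in blast)
      then show ?thesis by simp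
    qed
  qed
  hence "?g ` ?X \<subseteq> {0, 1}" by (rule image_subsetI)
  moreover have "1 \<in> ?g ` ?X"
  proof (rule rev_image_eqI)
    show "(\<lambda>v. if v = a then 1 else 0) \<in> ?X"
      using U by (intro vertex_in_geom_real[OF assms(1) _ assms(2)]) auto
    show "1 = ?g (\<lambda>v. if v = a then 1 else 0)" using \<open>finite U\<close> U by (simp add: sum.delta)
  qed
  moreover have "0 \<in> ?g ` ?X"
  proof (rule rev_image_eqI)
    show "(\<lambda>v. if v = b then 1 else 0) \<in> ?X"
      using U by (intro vertex_in_geom_real[OF assms(1) _ assms(2)]) auto
    show "0 = ?g (\<lambda>v. if v = b then 1 else 0)" using \<open>finite U\<close> U by (simp add: sum.delta)
  qed
  ultimately have "?g ` ?X = {0, 1}" by (intro subset_antisym) simp_all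
  with connected_image show False using connected_finite_iff_sing[of "{0 :: real, 1}"] by auto
qed

lemma hypergraph_finite_edges: "hypergraph V C \<Longrightarrow> finite C"
  unfolding hypergraph_def by (meson Pow_iff finite_Pow_iff rev_finite_subset subsetI)

theorem lemma3p6:
  fixes V :: "'a set" and C :: "'a set set"
  assumes "hypergraph V C"
    and "psi V C = 1"
  shows "geom_real V (Ind V C) \<noteq> {} \<and> \<not> path_connected (geom_real V (Ind V C))"
proof -
  have "finite V" "finite C" and edges: "\<forall>E\<in>C. E \<subseteq> V \<and> 2 \<le> card E"
    using assms(1) hypergraph_finite_edges unfolding hypergraph_def by auto
  have "V \<noteq> {}" using assms(2) psi_empty_vertices by (metis zero_neq_one)
  then obtain a where "a \<in> V" by auto
  have "geom_real V (Ind V C) \<noteq> {}"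
    using vertex_in_geom_real[OF \<open>finite V\<close> \<open>a \<in> V\<close>] edges by blast
  moreover have "faces_split V C"
    using two_le_psi_if_not_faces_split[OF \<open>finite V\<close> \<open>V \<noteq> {}\<close> \<open>finite C\<close> edges] assms(2)
    by (auto simp: one_enat_def numeral_eq_enat)
  ultimately show ?thesis
    using not_connected_geom_real_if_faces_split \<open>finite V\<close> edges path_connected_imp_connected
    by blast
qed

end
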